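(* For $s,L$ large enough, the deterministic subset $\Xi=[-s,s]\cap\mathbb{Z}_L$ is typically $s$-sparse and is $s/16$-cosine generic.
   Context: $\mathbb{Z}_L=\{\lfloor-(L-1)/2\rfloor,\dots,\lfloor(L-1)/2\rfloor\}$. A (possibly deterministic) random subset $\Xi\subset\mathbb{Z}_L$ is typically $s$-sparse if for some fixed constants $\alpha,\beta>0$ we have $\alpha s\le|\Xi|\le\beta s$ with probability $1-o_L(1)$. With $\mathcal{V}(\Xi,a)=\mathbf{1}_{\{0\in\Xi\}}+2\sum_{k\in\Xi\setminus\{0\}}\cos^2(2\pi ak/L)$, $\Xi$ is $\Gamma$-cosine generic if with probability $1-o_L(1)$, $\min_{a\in\mathbb{Z}_L}\mathcal{V}(\Xi,a)\ge\Gamma(1-o_L(1))$. *)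

theory Defs
  imports "HOL-Analysis.Analysis"
begin

definition ZL :: "nat \<Rightarrow> int set" where
  "ZL L = {\<lfloor>- (real L - 1) / 2\<rfloor> .. \<lfloor>(real L - 1) / 2\<rfloor>}"

definition cosV :: "nat \<Rightarrow> int set \<Rightarrow> int \<Rightarrow> real" where
  "cosV L Xi a = (if 0 \<in> Xi then 1 else 0)
      + 2 * (\<Sum>k\<in>Xi - {0}. (cos (2 * pi * real_of_int a * real_of_int k / real L))^2)"

text \<open>Deterministic families of subsets Xi L of Z_L (indexed by L): the probability
  1 - o_L(1) events become events holding for all sufficiently large L.\<close>
definition typically_sparse :: "(nat \<Rightarrow> int set) \<Rightarrow> (nat \<Rightarrow> real) \<Rightarrow> bool" where
  "typically_sparse Xi s \<longleftrightarrow>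
     (\<exists>\<alpha> \<beta>. \<alpha> > 0 \<and> \<beta> > 0 \<and>
        (\<forall>\<^sub>F L in sequentially. \<alpha> * s L \<le> real (card (Xi L)) \<and> real (card (Xi L)) \<le> \<beta> * s L))"

definition cosine_generic :: "(nat \<Rightarrow> int set) \<Rightarrow> (nat \<Rightarrow> real) \<Rightarrow> bool" where
  "cosine_generic Xi \<Gamma> \<longleftrightarrow>
     (\<exists>e. e \<longlonglongrightarrow> 0 \<and>
        (\<forall>\<^sub>F L in sequentially. Min ((\<lambda>a. cosV L (Xi L) a) ` ZL L) \<ge> \<Gamma> L * (1 - e L)))"

definition interval_set :: "nat \<Rightarrow> nat \<Rightarrow> int set" where
  "interval_set s L = {k \<in> ZL L. - int s \<le> k \<and> k \<le> int s}"

end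

theory Submission
  imports Defs
begin

text \<open>A single term \<open>cos\<^sup>2(2\<pi>ak/L)\<close> may vanish, but the terms
  at \<open>k\<close> and \<open>2k\<close> cannot both be small: with \<open>c = cos\<^sup>2 x\<close> one has
  \<open>cos\<^sup>2 x + cos\<^sup>2 (2x) = c + (2c - 1)\<^sup>2 \<ge> 7/16\<close>. Pairing \<open>k\<close> with \<open>2k\<close> shows that \<open>t\<close> consecutive
  terms sum to roughly \<open>t/8\<close> or more, uniformly in \<open>a\<close>, which gives \<open>V \<ge> s/16\<close>.\<close>

lemma cos_power2_plus_cos_double_power2_ge: "cos x ^ 2 + cos (2 * x) ^ 2 \<ge> (7/16::real)"
proof -
  define c where "c = cos x ^ 2"
  have "cos (2 * x) ^ 2 = (2 * c - 1) ^ 2"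
    by (simp add: cos_double_cos c_def)
  moreover have "c + (2 * c - 1) ^ 2 - 7/16 = (4 * c - 3/2) ^ 2 / 4"
    by (simp add: power2_eq_square algebra_simps)
  moreover have "(4 * c - 3/2) ^ 2 \<ge> 0"
    by (rule zero_le_power2)
  ultimately have "c + cos (2 * x) ^ 2 \<ge> 7/16"
    by linarith
  then show ?thesis
    by (simp add: c_def)
qed

lemma sum_pairs_double_le:
  fixes f :: "nat \<Rightarrow> real"
  assumes "\<And>k. f k \<ge> 0"
  shows "(\<Sum>k=1..m. f k + f (2 * k)) \<le> 2 * (\<Sum>k=1..2*m. f k)"
proof -
  have "(\<Sum>k=1..m. f (2 * k)) = (\<Sum>k\<in>(*) 2 ` {1..m}. f k)"
    by (subst sum.reindex) (auto simp: inj_on_def)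
  then have "(\<Sum>k=1..m. f k + f (2 * k)) = (\<Sum>k=1..m. f k) + (\<Sum>k\<in>(*) 2 ` {1..m}. f k)"
    by (simp add: sum.distrib)
  also have "(\<Sum>k=1..m. f k) \<le> (\<Sum>k=1..2*m. f k)"
    by (rule sum_mono2) (auto simp: assms)
  also have "(\<Sum>k\<in>(*) 2 ` {1..m}. f k) \<le> (\<Sum>k=1..2*m. f k)"
    by (rule sum_mono2) (auto simp: assms)
  finally show ?thesis
    by simp
qed

lemma sum_cos_power2_ge:
  fixes p :: real
  shows "(\<Sum>k=1..t. cos (p * real k) ^ 2) \<ge> (real t - 1) / 16"
proof -
  define m where "m = t div 2"
  have "(\<Sum>k=1..m. 7/16) \<le> (\<Sum>k=1..m. cos (p * real k) ^ 2 + cos (p * real (2 * k)) ^ 2)"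
    using cos_power2_plus_cos_double_power2_ge[of "p * real _"]
    by (intro sum_mono) (simp add: algebra_simps)
  then have "7/16 * real m \<le> (\<Sum>k=1..m. cos (p * real k) ^ 2 + cos (p * real (2 * k)) ^ 2)"
    by simp
  also have "\<dots> \<le> 2 * (\<Sum>k=1..2*m. cos (p * real k) ^ 2)"
    by (rule sum_pairs_double_le) simp
  also have "(\<Sum>k=1..2*m. cos (p * real k) ^ 2) \<le> (\<Sum>k=1..t. cos (p * real k) ^ 2)"
    by (rule sum_mono2) (auto simp: m_def)
  finally have "7/32 * real m \<le> (\<Sum>k=1..t. cos (p * real k) ^ 2)"
    by simp
  moreover have "real t - 1 \<le> 2 * real m"
    unfolding m_def by linarith
  ultimately show ?thesis
    by (simp add: field_simps)
qed

definition ZL_top :: "nat \<Rightarrow> nat" where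
  "ZL_top L = nat \<lfloor>(real L - 1) / 2\<rfloor>"

lemma ZL_top_eq: "ZL_top L = nat ((int L - 1) div 2)"
  using floor_divide_of_int_eq[where 'a=real, of "int L - 1" 2] by (simp add: ZL_top_def)

lemma ZL_top_ge: "L \<le> 2 * ZL_top L + 2"
  unfolding ZL_top_eq by linarith

lemma nonneg_range_subset_ZL:
  assumes "L \<ge> 1"
  shows "{0..int (ZL_top L)} \<subseteq> ZL L"
proof -
  have "\<lfloor>- (real L - 1) / 2\<rfloor> \<le> 0" "\<lfloor>(real L - 1) / 2\<rfloor> \<ge> 0"
    using assms by simp_all
  then show ?thesis
    by (auto simp: ZL_def ZL_top_def)
qed

lemma zero_in_ZL: "L \<ge> 1 \<Longrightarrow> 0 \<in> ZL L"
  using nonneg_range_subset_ZL by fastforce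

lemma finite_interval_set: "finite (interval_set s L)"
  by (rule finite_subset[of _ "{- int s .. int s}"]) (auto simp: interval_set_def)

lemma nonneg_range_subset_interval_set:
  assumes "L \<ge> 1"
  shows "{0..int (min s (ZL_top L))} \<subseteq> interval_set s L"
  using nonneg_range_subset_ZL[OF assms] by (auto simp: interval_set_def subset_iff min_def)

lemma le_min_ZL_top:
  assumes "s \<le> L"
  shows "s \<le> 2 * min s (ZL_top L) + 2"
  using ZL_top_ge[of L] assms by (simp add: min_def)

lemma card_interval_set_le: "card (interval_set s L) \<le> 2 * s + 1"
proof -
  have "card (interval_set s L) \<le> card {- int s .. int s}"
    by (rule card_mono) (auto simp: interval_set_def)
  then show ?thesis
    by simp
qed

lemma card_interval_set_ge:
  assumes "L \<ge> 1" and "s \<le> L"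
  shows "real s \<le> 2 * real (card (interval_set s L))"
proof -
  define t where "t = min s (ZL_top L)"
  have "card {0..int t} \<le> card (interval_set s L)"
    using card_mono[OF finite_interval_set nonneg_range_subset_interval_set[OF assms(1)]]
    by (simp add: t_def)
  then have "t + 1 \<le> card (interval_set s L)"
    by simp
  then show ?thesis
    using le_min_ZL_top[OF assms(2)] unfolding t_def of_nat_le_iff[symmetric] by (simp add: field_simps)
qed

lemma cosV_interval_set_ge:
  assumes "L \<ge> 1" and "s \<le> L"
  shows "cosV L (interval_set s L) a \<ge> real s / 16"
proof -
  define t where "t = min s (ZL_top L)"
  define g where "g = (\<lambda>k::int. cos (2 * pi * real_of_int a * real_of_int k / real L) ^ 2)"
  have range: "{0..int t} \<subseteq> interval_set s L"
    unfolding t_def by (rule nonneg_range_subset_interval_set[OF assms(1)])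
  have "(\<Sum>k=1..t. cos (2 * pi * real_of_int a / real L * real k) ^ 2) = (\<Sum>k\<in>int ` {1..t}. g k)"
    by (simp add: sum.reindex g_def)
  also have "\<dots> \<le> (\<Sum>k\<in>interval_set s L - {0}. g k)"
    using range by (intro sum_mono2) (auto simp: finite_interval_set g_def)
  finally have "(real t - 1) / 16 \<le> (\<Sum>k\<in>interval_set s L - {0}. g k)"
    using sum_cos_power2_ge order_trans by blast
  moreover have "0 \<in> interval_set s L"
    using range by auto
  ultimately have "1 + 2 * ((real t - 1) / 16) \<le> cosV L (interval_set s L) a"
    by (simp add: cosV_def g_def)
  then show ?thesis
    using le_min_ZL_top[OF assms(2)] unfolding t_def of_nat_le_iff[symmetric] by (simp add: field_simps)
qed

lemma Min_cosV_interval_set_ge: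
  assumes "L \<ge> 1" and "s \<le> L"
  shows "real s / 16 \<le> Min ((\<lambda>a. cosV L (interval_set s L) a) ` ZL L)"
proof -
  have "finite (ZL L)" "ZL L \<noteq> {}"
    using zero_in_ZL[OF assms(1)] by (auto simp only: ZL_def finite_atLeastAtMost_int)
  then show ?thesis
    using cosV_interval_set_ge[OF assms] by (subst Min_ge_iff) auto
qed

theorem lemma5p9:
  fixes s :: "nat \<Rightarrow> nat"
  assumes "filterlim s at_top sequentially"
    and "\<forall>L. s L \<le> L"
  shows "typically_sparse (\<lambda>L. interval_set (s L) L) (\<lambda>L. real (s L))
       \<and> cosine_generic (\<lambda>L. interval_set (s L) L) (\<lambda>L. real (s L) / 16)"
proof
  have "\<forall>\<^sub>F L in sequentially. 1 \<le> s L"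
    using assms(1) by (simp add: filterlim_at_top)
  then have large: "\<forall>\<^sub>F L in sequentially. 1 \<le> s L \<and> 1 \<le> L"
    by eventually_elim (use assms(2) le_trans in blast)
  have "\<forall>\<^sub>F L in sequentially. 1/2 * real (s L) \<le> real (card (interval_set (s L) L))
      \<and> real (card (interval_set (s L) L)) \<le> 3 * real (s L)"
    using large
  proof eventually_elim
    case (elim L)
    then show ?case
      using card_interval_set_ge[of L "s L"] card_interval_set_le[of "s L" L] assms(2)
      by (simp add: of_nat_le_iff[symmetric])
  qed
  then show "typically_sparse (\<lambda>L. interval_set (s L) L) (\<lambda>L. real (s L))"
    unfolding typically_sparse_def by (intro exI[of _ "1/2"] exI[of _ 3]) simp
  have "\<forall>\<^sub>F L in sequentially. real (s L) / 16
      \<le> Min ((\<lambda>a. cosV L (interval_set (s L) L) a) ` ZL L)"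
    using large by eventually_elim (intro Min_cosV_interval_set_ge, auto simp: assms(2))
  then show "cosine_generic (\<lambda>L. interval_set (s L) L) (\<lambda>L. real (s L) / 16)"
    unfolding cosine_generic_def by (intro exI[of _ "\<lambda>_. 0"]) simp
qed

end
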